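(* Let $\alpha\in\mathbb N^n$ and let $\mathcal A=\{u_1,\ldots,u_m\}$ be a set of monomials of degree $d$ in $S=K[x_1,\ldots,x_n]$. Then $\mathcal A$ is sortable if and only if $\mathcal A^\alpha$ is sortable.
   Context: $\mathbb N$ denotes the positive integers. For $\alpha=(k_1,\ldots,k_n)$, $S^\alpha=K[x_{ij}:1\le i\le n,1\le j\le k_i]$, $\pi:S^\alpha\to S$, $x_{ij}\mapsto x_i$, and $\mathcal A^\alpha$ is the set of monomials $w\in S^\alpha$ with $\pi(w)\in\mathcal A$. Sorting: for a totally ordered set of variables and monomials $u,v$ of degree $d$, write $uv=z_1z_2\cdots z_{2d}$ with variables $z_1\le z_2\le\cdots\le z_{2d}$, and set $\mathrm{sort}(u,v)=(u',v')$ with $u'=\prod_{j=1}^d z_{2j-1}$, $v'=\prod_{j=1}^d z_{2j}$. A set $\mathcal B$ of degree-$d$ monomials is sortable if $\mathrm{sort}(u,v)\in\mathcal B\times\mathcal B$ for all $u,v\in\mathcal B$. In $S$ the variables are ordered $x_1<\cdots<x_n$ and in $S^\alpha$ they are ordered $x_{11}<\cdots<x_{1k_1}<\cdots<x_{n1}<\cdots<x_{nk_n}$. *)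

theory Defs
  imports Main "HOL-Library.Multiset" "HOL-Library.Product_Lexorder"
begin

text \<open>A monomial over a totally ordered set of variables is represented by the
multiset of its variables (with multiplicity); its degree is the size.
The product of monomials is multiset sum.\<close>

definition sort_mon :: "'v::linorder multiset \<Rightarrow> 'v multiset \<Rightarrow> 'v multiset \<times> 'v multiset" where
  "sort_mon u v =
     (let zs = sorted_list_of_multiset (u + v)
      in (mset (nths zs {j. even j}), mset (nths zs {j. odd j})))"

definition sortable :: "'v::linorder multiset set \<Rightarrow> bool" where
  "sortable B \<longleftrightarrow> (\<forall>u\<in>B. \<forall>v\<in>B. sort_mon u v \<in> B \<times> B)"

text \<open>Variables of S are x_1..x_n, encoded by i; variables of S^alpha are x_ij,
encoded by the pair (i,j), ordered lexicographically.\<close>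

definition mon_S :: "nat \<Rightarrow> nat multiset \<Rightarrow> bool" where
  "mon_S n u \<longleftrightarrow> set_mset u \<subseteq> {1..n}"

definition mon_Salpha :: "nat \<Rightarrow> (nat \<Rightarrow> nat) \<Rightarrow> (nat \<times> nat) multiset \<Rightarrow> bool" where
  "mon_Salpha n k w \<longleftrightarrow> set_mset w \<subseteq> {(i, j). 1 \<le> i \<and> i \<le> n \<and> 1 \<le> j \<and> j \<le> k i}"

definition proj :: "(nat \<times> nat) multiset \<Rightarrow> nat multiset" where
  "proj w = image_mset fst w"

definition polarization_set :: "nat \<Rightarrow> (nat \<Rightarrow> nat) \<Rightarrow> nat multiset set \<Rightarrow> (nat \<times> nat) multiset set" where
  "polarization_set n k A = {w. mon_Salpha n k w \<and> proj w \<in> A}"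

end

theory Submission
  imports Defs
begin

text \<open>Sorting commutes with every monotone map of the variables, in particular with the
projection \<open>x\<^sub>i\<^sub>j \<mapsto> x\<^sub>i\<close>, which is monotone for the lexicographic order. Hence the
sorted pair of two monomials of \<open>\<A>\<^sup>\<alpha>\<close> projects to the sorted pair of their projections, and
sorting never introduces new variables; this gives sortability of \<open>\<A>\<^sup>\<alpha>\<close> from that of \<open>\<A>\<close>.
Conversely, the embedding \<open>x\<^sub>i \<mapsto> x\<^sub>i\<^sub>1\<close> maps \<open>\<A>\<close> into \<open>\<A>\<^sup>\<alpha>\<close> and is a section of the
projection.\<close>

lemma sorted_list_of_multiset_image_mset:
  fixes f :: "'a::linorder \<Rightarrow> 'b::linorder"
  assumes "mono f"
  shows "sorted_list_of_multiset (image_mset f M) = map f (sorted_list_of_multiset M)"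
proof -
  let ?L = "sorted_list_of_multiset M"
  have "sorted (map f ?L)"
    using assms by (intro sorted_map_mono) (auto intro: mono_on_subset)
  then have "sort (map f ?L) = map f ?L"
    by (rule sorted_sort_id)
  moreover have "image_mset f M = mset (map f ?L)"
    by simp
  ultimately show ?thesis
    by (metis sorted_list_of_multiset_mset)
qed

lemma sort_mon_image_mset:
  fixes f :: "'a::linorder \<Rightarrow> 'b::linorder"
  assumes "mono f"
  shows "sort_mon (image_mset f u) (image_mset f v) = map_prod (image_mset f) (image_mset f) (sort_mon u v)"
proof -
  have "sorted_list_of_multiset (image_mset f u + image_mset f v)
          = map f (sorted_list_of_multiset (u + v))"
    using sorted_list_of_multiset_image_mset[OF assms, of "u + v"] by simp
  then show ?thesis
    unfolding sort_mon_def Let_def by (simp add: nths_map)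
qed

lemma mono_fst_lex: "mono (fst :: 'a::linorder \<times> 'b::linorder \<Rightarrow> 'a)"
  by (rule monoI) (auto simp: less_eq_prod_def)

lemma proj_sort_mon: "sort_mon (proj w) (proj w') = map_prod proj proj (sort_mon w w')"
  unfolding proj_def by (rule sort_mon_image_mset[OF mono_fst_lex])

lemma set_mset_sort_mon_subset:
  "set_mset (fst (sort_mon u v)) \<subseteq> set_mset u \<union> set_mset v"
  "set_mset (snd (sort_mon u v)) \<subseteq> set_mset u \<union> set_mset v"
  unfolding sort_mon_def Let_def by (auto dest: in_set_nthsD)

lemma sortable_polarization_set:
  assumes "sortable A"
  shows "sortable (polarization_set n k A)"
  unfolding sortable_def
proof (intro ballI)
  fix w w' assume w: "w \<in> polarization_set n k A" and w': "w' \<in> polarization_set n k A"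
  obtain s t where st: "sort_mon w w' = (s, t)"
    by fastforce
  have "sort_mon (proj w) (proj w') \<in> A \<times> A"
    using assms w w' unfolding sortable_def polarization_set_def by auto
  then have "proj s \<in> A" "proj t \<in> A"
    by (simp_all add: proj_sort_mon st)
  moreover have "mon_Salpha n k s" "mon_Salpha n k t"
    using w w' set_mset_sort_mon_subset[of w w'] unfolding st polarization_set_def mon_Salpha_def
    by auto
  ultimately show "sort_mon w w' \<in> polarization_set n k A \<times> polarization_set n k A"
    unfolding st polarization_set_def by simp
qed

lemma sortable_if_sortable_polarization_set:
  assumes k: "\<forall>i\<in>{1..n}. k i \<ge> 1"
    and A: "\<forall>u\<in>A. mon_S n u"
    and sortable: "sortable (polarization_set n k A)"
  shows "sortable A"
  unfolding sortable_def
proof (intro ballI)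
  define embed :: "nat multiset \<Rightarrow> (nat \<times> nat) multiset" where
    "embed = image_mset (\<lambda>i. (i, 1))"
  have proj_embed: "proj (embed u) = u" for u
    unfolding proj_def embed_def by (simp add: multiset.map_comp comp_def)
  have embed_mem: "embed u \<in> polarization_set n k A" if "u \<in> A" for u
    using that A k proj_embed[of u]
    unfolding polarization_set_def mon_Salpha_def mon_S_def embed_def by fastforce
  fix u v assume "u \<in> A" "v \<in> A"
  then have "sort_mon (embed u) (embed v) \<in> polarization_set n k A \<times> polarization_set n k A"
    using sortable embed_mem unfolding sortable_def by blast
  then have "map_prod proj proj (sort_mon (embed u) (embed v)) \<in> A \<times> A"
    unfolding polarization_set_def by (cases "sort_mon (embed u) (embed v)") auto
  then show "sort_mon u v \<in> A \<times> A"
    by (simp add: proj_sort_mon[symmetric] proj_embed)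
qed

theorem theorem2p14:
  fixes n d :: nat and k :: "nat \<Rightarrow> nat" and A :: "nat multiset set"
  assumes "\<forall>i\<in>{1..n}. k i \<ge> 1"
    and "finite A"
    and "\<forall>u\<in>A. mon_S n u \<and> size u = d"
  shows "sortable A \<longleftrightarrow> sortable (polarization_set n k A)"
  using assms(1,3) sortable_polarization_set sortable_if_sortable_polarization_set by blast

end
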